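(* Let $\mathfrak g$ be any complex simple Lie algebra with a choice of positive roots $\Sigma^+$. Then, as a rational function, $$\sum_{\substack{\beta,\gamma\in\Sigma^+\\ \beta\neq\gamma}}\frac{\langle\beta,\gamma\rangle}{\beta\,\gamma}=0.$$
   Context: Roots are regarded as linear functions (on the real Cartan subspace, equivalently on its dual via the inner product), so $\frac{\langle\beta,\gamma\rangle}{\beta\gamma}$ is a rational function whose numerator is the constant $\langle\beta,\gamma\rangle$, the inner product on roots induced by the Killing form. *)

theory Defs
  imports "HOL-Analysis.Analysis"
begin

text \<open>Root systems of complex simple Lie algebras, realised in a real Euclidean
space (the real span of the roots, i.e. the dual of the real Cartan subspace, with
the inner product induced by the Killing form).\<close>

definition root_system :: "'a::euclidean_space set \<Rightarrow> bool" where
  "root_system R \<longleftrightarrow> finite R \<and> 0 \<notin> R \<and> span R = UNIV \<and>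
     (\<forall>\<alpha>\<in>R. \<forall>\<beta>\<in>R. \<beta> - (2 * (\<beta> \<bullet> \<alpha>) / (\<alpha> \<bullet> \<alpha>)) *\<^sub>R \<alpha> \<in> R) \<and>
     (\<forall>\<alpha>\<in>R. \<forall>\<beta>\<in>R. 2 * (\<beta> \<bullet> \<alpha>) / (\<alpha> \<bullet> \<alpha>) \<in> \<int>)"

definition reduced_root_system :: "'a::euclidean_space set \<Rightarrow> bool" where
  "reduced_root_system R \<longleftrightarrow> (\<forall>\<alpha>\<in>R. \<forall>c::real. c *\<^sub>R \<alpha> \<in> R \<longrightarrow> c = 1 \<or> c = -1)"

definition irreducible_root_system :: "'a::euclidean_space set \<Rightarrow> bool" where
  "irreducible_root_system R \<longleftrightarrow>
     \<not> (\<exists>R1 R2. R1 \<noteq> {} \<and> R2 \<noteq> {} \<and> R1 \<union> R2 = R \<and> R1 \<inter> R2 = {} \<and>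
            (\<forall>a\<in>R1. \<forall>b\<in>R2. a \<bullet> b = 0))"

definition positive_system :: "'a::euclidean_space set \<Rightarrow> 'a set \<Rightarrow> bool" where
  "positive_system R P \<longleftrightarrow> (\<exists>v. (\<forall>\<alpha>\<in>R. v \<bullet> \<alpha> \<noteq> 0) \<and> P = {\<alpha>\<in>R. 0 < v \<bullet> \<alpha>})"

end

theory Submission
  imports Defs "HOL-Computational_Algebra.Polynomial"
begin

text \<open>Clearing denominators, the sum is \<open>L(x) / \<Prod>\<^sub>\<delta> \<delta>\<bullet>x\<close>, where \<open>L\<close> is the Laplacian of
  the product of the positive roots (as linear forms). Restricted to a generic line \<open>x + \<tau> y\<close>,
  \<open>L\<close> is a polynomial in \<open>\<tau>\<close> of degree at most \<open>|\<Sigma>\<^sup>+| - 2\<close>. At the point where the line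
  meets the hyperplane \<open>\<alpha>\<^sup>\<perp>\<close> only the pairs containing \<open>\<alpha>\<close> contribute, and their contribution
  \<open>\<Sum>\<^sub>\<gamma> \<langle>\<alpha>,\<gamma>\<rangle>/\<gamma>(z)\<close> vanishes because the reflection \<open>s\<^sub>\<alpha>\<close> permutes the positive
  roots other than \<open>\<alpha>\<close> up to sign, fixing \<open>\<gamma>(z)\<close> and negating \<open>\<langle>\<alpha>,\<gamma>\<rangle>\<close>. So the polynomial
  has \<open>|\<Sigma>\<^sup>+|\<close> distinct roots and vanishes identically.\<close>

lemma ex_not_orthogonal_finite:
  fixes W :: "'a::euclidean_space set"
  assumes "finite W" "0 \<notin> W"
  shows "\<exists>y. \<forall>w\<in>W. w \<bullet> y \<noteq> 0"
proof -
  have "negligible (\<Union>w\<in>W. {y. w \<bullet> y = 0})"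
    using assms by (auto intro!: negligible_Union negligible_hyperplane)
  then obtain y where "y \<notin> (\<Union>w\<in>W. {y. w \<bullet> y = 0})"
    using non_negligible_UNIV by (metis UNIV_eq_I)
  then show ?thesis by blast
qed

definition root_reflection :: "'a::euclidean_space \<Rightarrow> 'a \<Rightarrow> 'a" where
  "root_reflection a b = b - (2 * (b \<bullet> a) / (a \<bullet> a)) *\<^sub>R a"

lemma root_system_reflection_mem:
  assumes "root_system R" "a \<in> R" "b \<in> R"
  shows "root_reflection a b \<in> R"
  using assms unfolding root_system_def root_reflection_def by blast

lemma root_system_nonzero: "root_system R \<Longrightarrow> a \<in> R \<Longrightarrow> a \<noteq> 0"
  unfolding root_system_def by auto

lemma root_reflection_self: "a \<noteq> 0 \<Longrightarrow> root_reflection a a = - a"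
  by (simp add: root_reflection_def algebra_simps scaleR_2)

lemma root_system_uminus_mem:
  assumes "root_system R" "a \<in> R"
  shows "- a \<in> R"
  using root_system_reflection_mem[OF assms assms(2)]
  by (simp add: root_reflection_self root_system_nonzero[OF assms])

lemma root_reflection_involutive:
  "a \<noteq> 0 \<Longrightarrow> root_reflection a (root_reflection a b) = b"
  by (simp add: root_reflection_def inner_diff_left field_simps)

lemma root_reflection_uminus: "root_reflection a (- b) = - root_reflection a b"
  by (simp add: root_reflection_def algebra_simps)

lemma inner_root_reflection_orthogonal:
  "a \<bullet> z = 0 \<Longrightarrow> root_reflection a b \<bullet> z = b \<bullet> z"
  by (simp add: root_reflection_def inner_diff_left)

lemma inner_root_reflection_self:
  "a \<noteq> 0 \<Longrightarrow> a \<bullet> root_reflection a b = - (a \<bullet> b)"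
  by (simp add: root_reflection_def inner_diff_right inner_commute field_simps)

lemma root_reflection_eq_iff:
  "root_reflection a b = c \<longleftrightarrow> b = c + (2 * (b \<bullet> a) / (a \<bullet> a)) *\<^sub>R a"
  by (auto simp: root_reflection_def algebra_simps)

lemma positive_system_subset: "positive_system R P \<Longrightarrow> P \<subseteq> R"
  unfolding positive_system_def by auto

lemma positive_system_finite: "root_system R \<Longrightarrow> positive_system R P \<Longrightarrow> finite P"
  unfolding root_system_def by (metis finite_subset positive_system_subset)

lemma positive_system_uminus_iff:
  assumes "root_system R" "positive_system R P" "a \<in> R"
  shows "- a \<in> P \<longleftrightarrow> a \<notin> P"
proof -
  obtain v where "\<forall>\<alpha>\<in>R. v \<bullet> \<alpha> \<noteq> 0" and P: "P = {\<alpha>\<in>R. 0 < v \<bullet> \<alpha>}"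
    using assms(2) unfolding positive_system_def by blast
  then have "v \<bullet> a \<noteq> 0" using assms(3) by blast
  then show ?thesis
    using root_system_uminus_mem[OF assms(1,3)] assms(3) by (auto simp: P)
qed

lemma positive_system_not_proportional:
  assumes "reduced_root_system R" "positive_system R P" "a \<in> P" "b \<in> P" "a \<noteq> b"
  shows "b \<noteq> c *\<^sub>R a"
proof
  assume b: "b = c *\<^sub>R a"
  have "c = 1 \<or> c = -1"
    using assms b positive_system_subset unfolding reduced_root_system_def by blast
  with assms b show False
    unfolding positive_system_def by auto
qed

definition positive_reflection :: "'a::euclidean_space set \<Rightarrow> 'a \<Rightarrow> 'a \<Rightarrow> 'a" where
  "positive_reflection P a g =
     (if root_reflection a g \<in> P then root_reflection a g else - root_reflection a g)"

lemma positive_reflection_mem: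
  assumes "root_system R" "reduced_root_system R" "positive_system R P"
    and "a \<in> P" "g \<in> P - {a}"
  shows "positive_reflection P a g \<in> P - {a}"
proof -
  have "a \<in> R" "g \<in> R" using assms positive_system_subset by auto
  then have "root_reflection a g \<in> R" by (rule root_system_reflection_mem[OF assms(1)])
  then have "positive_reflection P a g \<in> P"
    using positive_system_uminus_iff[OF assms(1,3)] by (auto simp: positive_reflection_def)
  moreover have "positive_reflection P a g \<noteq> a"
  proof
    assume "positive_reflection P a g = a"
    then have "root_reflection a g = a \<or> root_reflection a g = - a"
      by (metis positive_reflection_def minus_minus)
    then have "g = (1 + 2 * (g \<bullet> a) / (a \<bullet> a)) *\<^sub>R a \<or> g = (2 * (g \<bullet> a) / (a \<bullet> a) - 1) *\<^sub>R a"
      by (auto simp: root_reflection_eq_iff algebra_simps)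
    then show False
      using positive_system_not_proportional[OF assms(2,3,4)] assms(5) by auto
  qed
  ultimately show ?thesis by blast
qed

lemma positive_reflection_involutive:
  assumes "root_system R" "positive_system R P" "a \<in> P" "g \<in> P"
  shows "positive_reflection P a (positive_reflection P a g) = g"
proof -
  have "a \<noteq> 0" "g \<in> R"
    using assms positive_system_subset root_system_nonzero by blast+
  show ?thesis
  proof (cases "root_reflection a g \<in> P")
    case True
    then show ?thesis
      using assms(4) \<open>a \<noteq> 0\<close> by (simp add: positive_reflection_def root_reflection_involutive)
  next
    case False
    have "- g \<notin> P"
      using positive_system_uminus_iff[OF assms(1,2) \<open>g \<in> R\<close>] assms(4) by blast
    with False \<open>a \<noteq> 0\<close> show ?thesis
      by (simp add: positive_reflection_def root_reflection_uminus root_reflection_involutive)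
  qed
qed

lemma sum_inner_div_positive_roots_eq_0:
  assumes "root_system R" "reduced_root_system R" "positive_system R P"
    and "a \<in> P" "a \<bullet> z = 0"
  shows "(\<Sum>g\<in>P - {a}. (a \<bullet> g) / (g \<bullet> z)) = 0"
proof -
  define f where "f g = (a \<bullet> g) / (g \<bullet> z)" for g
  define \<sigma> where "\<sigma> = positive_reflection P a"
  have "a \<noteq> 0"
    using assms positive_system_subset root_system_nonzero by blast
  then have "f (root_reflection a g) = - f g" for g
    by (simp add: f_def inner_root_reflection_orthogonal[OF assms(5)] inner_root_reflection_self)
  moreover have "f (- g) = f g" for g
    by (simp add: f_def)
  ultimately have f_\<sigma>: "f (\<sigma> g) = - f g" for g
    by (simp add: \<sigma>_def positive_reflection_def)
  have "(\<Sum>g\<in>P - {a}. f (\<sigma> g)) = (\<Sum>g\<in>P - {a}. f g)"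
    by (rule sum.reindex_bij_witness[where i=\<sigma> and j=\<sigma>])
      (use positive_reflection_mem[OF assms(1-4)] positive_reflection_involutive[OF assms(1,3,4)]
        in \<open>simp_all add: \<sigma>_def\<close>)
  then have "(\<Sum>g\<in>P - {a}. f g) = - (\<Sum>g\<in>P - {a}. f g)"
    by (simp add: f_\<sigma> sum_negf)
  then show ?thesis by (simp add: f_def)
qed

definition offdiag :: "'a set \<Rightarrow> ('a \<times> 'a) set" where
  "offdiag A = {(\<beta>, \<gamma>). \<beta> \<in> A \<and> \<gamma> \<in> A \<and> \<beta> \<noteq> \<gamma>}"

lemma finite_offdiag: "finite A \<Longrightarrow> finite (offdiag A)"
  by (rule finite_subset[of _ "A \<times> A"]) (auto simp: offdiag_def)

lemma sum_offdiag:
  assumes "finite A"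
  shows "(\<Sum>p\<in>offdiag A. g p) = (\<Sum>\<beta>\<in>A. \<Sum>\<gamma>\<in>A - {\<beta>}. g (\<beta>, \<gamma>))"
proof -
  have "offdiag A = Sigma A (\<lambda>\<beta>. A - {\<beta>})" by (auto simp: offdiag_def)
  then show ?thesis using assms by (simp add: sum.Sigma)
qed

text \<open>The Laplacian of \<open>w \<mapsto> \<Prod>\<^sub>\<delta>\<^sub>\<in>\<^sub>P \<delta> \<bullet> w\<close>.\<close>
definition laplacian_prod :: "'a::euclidean_space set \<Rightarrow> 'a \<Rightarrow> real" where
  "laplacian_prod P w = (\<Sum>(\<beta>, \<gamma>)\<in>offdiag P. (\<beta> \<bullet> \<gamma>) * (\<Prod>\<delta>\<in>P - {\<beta>, \<gamma>}. \<delta> \<bullet> w))"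

lemma sum_mult_prod_remove:
  fixes f :: "'a \<Rightarrow> 'b::field"
  assumes "finite A" "\<forall>\<delta>\<in>A. f \<delta> \<noteq> 0"
  shows "(\<Sum>\<gamma>\<in>A. c \<gamma> * (\<Prod>\<delta>\<in>A - {\<gamma>}. f \<delta>)) = (\<Prod>\<delta>\<in>A. f \<delta>) * (\<Sum>\<gamma>\<in>A. c \<gamma> / f \<gamma>)"
  unfolding sum_distrib_left
proof (rule sum.cong[OF refl])
  fix \<gamma> assume "\<gamma> \<in> A"
  then show "c \<gamma> * (\<Prod>\<delta>\<in>A - {\<gamma>}. f \<delta>) = (\<Prod>\<delta>\<in>A. f \<delta>) * (c \<gamma> / f \<gamma>)"
    using assms prod.remove[OF assms(1), of \<gamma> f] by simp
qed

lemma sum_offdiag_mult_prod_remove: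
  fixes f :: "'a \<Rightarrow> 'b::field"
  assumes "finite A" "\<forall>\<delta>\<in>A. f \<delta> \<noteq> 0"
  shows "(\<Sum>(\<beta>, \<gamma>)\<in>offdiag A. c \<beta> \<gamma> * (\<Prod>\<delta>\<in>A - {\<beta>, \<gamma>}. f \<delta>))
       = (\<Prod>\<delta>\<in>A. f \<delta>) * (\<Sum>(\<beta>, \<gamma>)\<in>offdiag A. c \<beta> \<gamma> / (f \<beta> * f \<gamma>))"
proof -
  have inner: "(\<Sum>\<gamma>\<in>A - {\<beta>}. c \<beta> \<gamma> * (\<Prod>\<delta>\<in>A - {\<beta>, \<gamma>}. f \<delta>))
      = (\<Prod>\<delta>\<in>A - {\<beta>}. f \<delta>) * (\<Sum>\<gamma>\<in>A - {\<beta>}. c \<beta> \<gamma> / f \<gamma>)" for \<beta>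
    using sum_mult_prod_remove[of "A - {\<beta>}" f "c \<beta>"] assms by (simp add: Diff_insert2[symmetric])
  have "(\<Sum>(\<beta>, \<gamma>)\<in>offdiag A. c \<beta> \<gamma> * (\<Prod>\<delta>\<in>A - {\<beta>, \<gamma>}. f \<delta>))
      = (\<Sum>\<beta>\<in>A. (\<Sum>\<gamma>\<in>A - {\<beta>}. c \<beta> \<gamma> / f \<gamma>) * (\<Prod>\<delta>\<in>A - {\<beta>}. f \<delta>))"
    by (simp add: sum_offdiag[OF assms(1)] inner mult.commute)
  also have "\<dots> = (\<Prod>\<delta>\<in>A. f \<delta>) * (\<Sum>\<beta>\<in>A. (\<Sum>\<gamma>\<in>A - {\<beta>}. c \<beta> \<gamma> / f \<gamma>) / f \<beta>)"
    by (rule sum_mult_prod_remove[OF assms])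
  also have "\<dots> = (\<Prod>\<delta>\<in>A. f \<delta>) * (\<Sum>(\<beta>, \<gamma>)\<in>offdiag A. c \<beta> \<gamma> / (f \<beta> * f \<gamma>))"
    by (simp add: sum_offdiag[OF assms(1)] sum_divide_distrib mult.commute)
  finally show ?thesis .
qed

lemma laplacian_prod_eq_prod_mult_sum:
  assumes "finite P" "\<forall>\<delta>\<in>P. \<delta> \<bullet> w \<noteq> 0"
  shows "laplacian_prod P w
       = (\<Prod>\<delta>\<in>P. \<delta> \<bullet> w) * (\<Sum>(\<beta>, \<gamma>)\<in>offdiag P. (\<beta> \<bullet> \<gamma>) / ((\<beta> \<bullet> w) * (\<gamma> \<bullet> w)))"
  unfolding laplacian_prod_def using sum_offdiag_mult_prod_remove[OF assms] .

lemma laplacian_prod_on_hyperplane: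
  assumes "finite P" "a \<in> P" "a \<bullet> w = 0" "\<forall>\<delta>\<in>P - {a}. \<delta> \<bullet> w \<noteq> 0"
  shows "laplacian_prod P w
       = 2 * (\<Prod>\<delta>\<in>P - {a}. \<delta> \<bullet> w) * (\<Sum>\<gamma>\<in>P - {a}. (a \<bullet> \<gamma>) / (\<gamma> \<bullet> w))"
proof -
  define f where "f \<beta> \<gamma> = (\<beta> \<bullet> \<gamma>) * (\<Prod>\<delta>\<in>P - {\<beta>, \<gamma>}. \<delta> \<bullet> w)" for \<beta> \<gamma>
  have other: "(\<Sum>\<gamma>\<in>P - {\<beta>}. f \<beta> \<gamma>) = f a \<beta>" if \<beta>: "\<beta> \<in> P - {a}" for \<beta>
  proof -
    have "f \<beta> \<gamma> = 0" if "\<gamma> \<in> P - {\<beta>} - {a}" for \<gamma>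
      using that \<beta> assms(1-3) by (auto simp: f_def prod_zero_iff)
    then have "(\<Sum>\<gamma>\<in>P - {\<beta>} - {a}. f \<beta> \<gamma>) = 0"
      by (rule sum.neutral[rule_format])
    then have "(\<Sum>\<gamma>\<in>P - {\<beta>}. f \<beta> \<gamma>) = f \<beta> a"
      using sum.remove[of "P - {\<beta>}" a "f \<beta>"] \<beta> assms(1,2) by auto
    then show ?thesis by (simp add: f_def inner_commute insert_commute)
  qed
  have "laplacian_prod P w = (\<Sum>\<beta>\<in>P. \<Sum>\<gamma>\<in>P - {\<beta>}. f \<beta> \<gamma>)"
    by (simp add: laplacian_prod_def sum_offdiag[OF assms(1)] f_def)
  also have "\<dots> = 2 * (\<Sum>\<gamma>\<in>P - {a}. f a \<gamma>)"
    using sum.remove[OF assms(1,2), of "\<lambda>\<beta>. \<Sum>\<gamma>\<in>P - {\<beta>}. f \<beta> \<gamma>"] by (simp add: other)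
  also have "(\<Sum>\<gamma>\<in>P - {a}. f a \<gamma>)
      = (\<Prod>\<delta>\<in>P - {a}. \<delta> \<bullet> w) * (\<Sum>\<gamma>\<in>P - {a}. (a \<bullet> \<gamma>) / (\<gamma> \<bullet> w))"
    using sum_mult_prod_remove[of "P - {a}" "\<lambda>\<delta>. \<delta> \<bullet> w" "\<lambda>\<gamma>. a \<bullet> \<gamma>"] assms(1,4)
    by (simp add: f_def Diff_insert2[symmetric])
  finally show ?thesis by simp
qed

lemma laplacian_prod_along_line:
  assumes "finite P"
  obtains Q where "degree Q \<le> card P - 2" "\<And>\<tau>. poly Q \<tau> = laplacian_prod P (x + \<tau> *\<^sub>R y)"
proof
  define Q where "Q = (\<Sum>(\<beta>, \<gamma>)\<in>offdiag P. smult (\<beta> \<bullet> \<gamma>) (\<Prod>\<delta>\<in>P - {\<beta>, \<gamma>}. [:\<delta> \<bullet> x, \<delta> \<bullet> y:]))"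
  show "poly Q \<tau> = laplacian_prod P (x + \<tau> *\<^sub>R y)" for \<tau>
    by (simp add: Q_def laplacian_prod_def poly_sum poly_prod case_prod_unfold
        inner_add_right algebra_simps)
  have "degree (smult (\<beta> \<bullet> \<gamma>) (\<Prod>\<delta>\<in>P - {\<beta>, \<gamma>}. [:\<delta> \<bullet> x, \<delta> \<bullet> y:])) \<le> card P - 2"
    if "(\<beta>, \<gamma>) \<in> offdiag P" for \<beta> \<gamma>
  proof -
    have "degree (\<Prod>\<delta>\<in>P - {\<beta>, \<gamma>}. [:\<delta> \<bullet> x, \<delta> \<bullet> y:]) \<le> (\<Sum>\<delta>\<in>P - {\<beta>, \<gamma>}. 1)"
      using assms by (intro order_trans[OF degree_prod_sum_le[OF finite_Diff]] sum_mono) auto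
    also have "\<dots> = card P - 2"
      using that assms by (auto simp: offdiag_def card_Diff_subset)
    finally show ?thesis by (meson degree_smult_le order_trans)
  qed
  then show "degree Q \<le> card P - 2"
    unfolding Q_def by (intro degree_sum_le) (auto simp: assms finite_offdiag)
qed

lemma ex_generic_line:
  fixes P :: "'a::euclidean_space set"
  assumes "finite P" "\<forall>\<delta>\<in>P. \<delta> \<bullet> x \<noteq> 0"
    and "\<forall>a\<in>P. \<forall>d\<in>P. a \<noteq> d \<longrightarrow> (\<forall>c. d \<noteq> c *\<^sub>R a)"
  obtains y t where "\<forall>a\<in>P. a \<bullet> (x + t a *\<^sub>R y) = 0"
    "\<forall>a\<in>P. \<forall>d\<in>P - {a}. d \<bullet> (x + t a *\<^sub>R y) \<noteq> 0"
proof -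
  define W where "W = P \<union> (\<lambda>(a, d). (a \<bullet> x) *\<^sub>R d - (d \<bullet> x) *\<^sub>R a) ` offdiag P"
  have "finite W" using assms(1) by (simp add: W_def finite_offdiag)
  moreover have "0 \<notin> W"
  proof
    assume "0 \<in> W"
    moreover have "0 \<notin> P" using assms(2) by auto
    ultimately obtain a d where ad: "a \<in> P" "d \<in> P" "a \<noteq> d"
      and "(a \<bullet> x) *\<^sub>R d - (d \<bullet> x) *\<^sub>R a = 0"
      by (auto simp: W_def offdiag_def)
    then have "d = ((d \<bullet> x) / (a \<bullet> x)) *\<^sub>R a"
      using assms(2) by (simp add: field_simps eq_vector_fraction_iff)
    then show False using assms(3) ad by blast
  qed
  ultimately obtain y where y: "\<forall>w\<in>W. w \<bullet> y \<noteq> 0"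
    using ex_not_orthogonal_finite by blast
  show ?thesis
  proof
    define t where "t a = - (a \<bullet> x) / (a \<bullet> y)" for a
    show "\<forall>a\<in>P. a \<bullet> (x + t a *\<^sub>R y) = 0"
    proof
      fix a assume "a \<in> P"
      then have "a \<bullet> y \<noteq> 0" using y by (simp add: W_def)
      then show "a \<bullet> (x + t a *\<^sub>R y) = 0" by (simp add: t_def inner_diff_right)
    qed
    show "\<forall>a\<in>P. \<forall>d\<in>P - {a}. d \<bullet> (x + t a *\<^sub>R y) \<noteq> 0"
    proof (intro ballI)
      fix a d assume "a \<in> P" "d \<in> P - {a}"
      then have "a \<bullet> y \<noteq> 0" "((a \<bullet> x) *\<^sub>R d - (d \<bullet> x) *\<^sub>R a) \<bullet> y \<noteq> 0"
        using y by (auto simp: W_def offdiag_def)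
      moreover have "d \<bullet> (x + t a *\<^sub>R y) = - (((a \<bullet> x) *\<^sub>R d - (d \<bullet> x) *\<^sub>R a) \<bullet> y) / (a \<bullet> y)"
        using \<open>a \<bullet> y \<noteq> 0\<close>
        by (simp add: t_def inner_diff_right inner_diff_left inner_commute[of _ y] field_simps)
      ultimately show "d \<bullet> (x + t a *\<^sub>R y) \<noteq> 0" by simp
    qed
  qed
qed

lemma laplacian_prod_eq_0:
  fixes P :: "'a::euclidean_space set"
  assumes "finite P" "\<forall>\<delta>\<in>P. \<delta> \<bullet> x \<noteq> 0"
    and "\<forall>a\<in>P. \<forall>d\<in>P. a \<noteq> d \<longrightarrow> (\<forall>c. d \<noteq> c *\<^sub>R a)"
    and residue: "\<And>a z. a \<in> P \<Longrightarrow> a \<bullet> z = 0 \<Longrightarrow> (\<Sum>\<gamma>\<in>P - {a}. (a \<bullet> \<gamma>) / (\<gamma> \<bullet> z)) = 0"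
  shows "laplacian_prod P x = 0"
proof -
  obtain y t where on: "\<forall>a\<in>P. a \<bullet> (x + t a *\<^sub>R y) = 0"
    and off: "\<forall>a\<in>P. \<forall>d\<in>P - {a}. d \<bullet> (x + t a *\<^sub>R y) \<noteq> 0"
    by (rule ex_generic_line[OF assms(1-3)])
  obtain Q where deg: "degree Q \<le> card P - 2"
    and Q: "\<And>\<tau>. poly Q \<tau> = laplacian_prod P (x + \<tau> *\<^sub>R y)"
    using laplacian_prod_along_line[OF assms(1), where x=x and y=y] by blast
  have roots: "poly Q (t a) = 0" if a: "a \<in> P" for a
  proof -
    have "(\<Sum>\<gamma>\<in>P - {a}. (a \<bullet> \<gamma>) / (\<gamma> \<bullet> (x + t a *\<^sub>R y))) = 0"
      using residue a on by blast
    then show ?thesis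
      using laplacian_prod_on_hyperplane[OF assms(1) a] on off a by (simp add: Q)
  qed
  have "inj_on t P"
  proof (rule inj_onI, rule ccontr)
    fix a d assume "a \<in> P" "d \<in> P" "t a = t d" "a \<noteq> d"
    then have "d \<bullet> (x + t a *\<^sub>R y) = 0" "d \<bullet> (x + t a *\<^sub>R y) \<noteq> 0"
      using on off by auto
    then show False by simp
  qed
  show ?thesis
  proof (cases "P = {}")
    case True then show ?thesis by (simp add: laplacian_prod_def offdiag_def)
  next
    case False
    then have "card P > 0" using assms(1) by (simp add: card_gt_0_iff)
    then have "card (t ` P) > degree Q"
      using deg \<open>inj_on t P\<close> by (simp add: card_image)
    then have "Q = 0"
      by (intro poly_eqI_degree[of "t ` P"]) (auto simp: roots)
    then show ?thesis using Q[of 0] by simp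
  qed
qed

theorem mainTheorem17:
  fixes R P :: "'a::euclidean_space set" and x :: 'a
  assumes "root_system R" and "reduced_root_system R" and "irreducible_root_system R"
    and "positive_system R P"
    and "\<forall>\<alpha>\<in>R. \<alpha> \<bullet> x \<noteq> 0"
  shows "(\<Sum>(\<beta>, \<gamma>) \<in> {(\<beta>, \<gamma>). \<beta> \<in> P \<and> \<gamma> \<in> P \<and> \<beta> \<noteq> \<gamma>}.
            (\<beta> \<bullet> \<gamma>) / ((\<beta> \<bullet> x) * (\<gamma> \<bullet> x))) = 0"
proof -
  have fin: "finite P" using positive_system_finite[OF assms(1,4)] .
  have x: "\<forall>\<delta>\<in>P. \<delta> \<bullet> x \<noteq> 0" using assms(5) positive_system_subset[OF assms(4)] by blast
  have "laplacian_prod P x = 0"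
    using fin x positive_system_not_proportional[OF assms(2,4)]
      sum_inner_div_positive_roots_eq_0[OF assms(1,2,4)]
    by (intro laplacian_prod_eq_0) auto
  moreover have "(\<Prod>\<delta>\<in>P. \<delta> \<bullet> x) \<noteq> 0" using fin x by simp
  ultimately show ?thesis
    using laplacian_prod_eq_prod_mult_sum[OF fin x] by (simp add: offdiag_def)
qed

end
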